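(* Let $\alpha\in\mathbb R$, let $(\mathfrak g,\varphi,\xi,\eta,g)$ be an almost $\alpha$-coK\"ahler Lie algebra, and let $\mathfrak h=\ker\eta$, $J=\varphi|_{\mathfrak h}$, $h=g|_{\mathfrak h\times\mathfrak h}$, $D=\mathrm{ad}_\xi|_{\mathfrak h}$. Then the following are equivalent: (i) $\mathcal L_\xi g=2\alpha(g-\eta\otimes\eta)$; (ii) $D+\alpha I$ is skew-adjoint with respect to $h$; (iii) $DJ=JD$; (iv) $\mathcal L_\xi\varphi=0$. In particular, when $\alpha=0$, condition (i) says that $\xi$ is Killing ($\mathcal L_\xi g=0$), i.e. each of (i)–(iv) is equivalent to $(\mathfrak g,\varphi,\xi,\eta,g)$ being $K$-cosymplectic.
   Context: For a Lie algebra, $d\eta(x,y)=-\eta([x,y])$ and $d\omega(x,y,z)=-\omega([x,y],z)-\omega([y,z],x)-\omega([z,x],y)$. An almost contact metric structure on a $(2n+1)$-dimensional Lie algebra $\mathfrak g$ is $(\varphi,\xi,\eta,g)$ with $\eta\in\mathfrak g^*$, $\varphi\in\mathrm{End}(\mathfrak g)$, $\xi\in\mathfrak g$, $g$ positive definite, $\eta(\xi)=1$, $\varphi^2=-I+\eta\otimes\xi$, $\eta\circ\varphi=0$, $g(\varphi x,\varphi y)=g(x,y)-\eta(x)\eta(y)$; $\Phi(x,y)=g(x,\varphi y)$. It is almost $\alpha$-coK\"ahler if $\eta\wedge\Phi^n\neq0$, $d\eta=0$, $d\Phi=2\alpha\,\eta\wedge\Phi$; for $\alpha=0$ it is called almost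 coK\"ahler, and an almost coK\"ahler Lie algebra is $K$-cosymplectic if $\xi$ is Killing. Lie derivatives along $\xi$ are those of the corresponding left-invariant tensors: $(\mathcal L_\xi g)(x,y)=-g([\xi,x],y)-g(x,[\xi,y])$, $\mathcal L_\xi\varphi=\mathrm{ad}_\xi\circ\varphi-\varphi\circ\mathrm{ad}_\xi$. *)

theory Defs
  imports "HOL-Analysis.Analysis" "HOL-Combinatorics.Permutations"
begin

text \<open>A real Lie algebra structure (bracket br) on a finite-dimensional real vector space.
  The ambient inner product of the euclidean_space type is NOT used; the metric is g.\<close>
definition lie_algebra :: "('a::real_vector \<Rightarrow> 'a \<Rightarrow> 'a) \<Rightarrow> bool" where
  "lie_algebra br \<longleftrightarrow> bilinear br \<and> (\<forall>x. br x x = 0) \<and>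
     (\<forall>x y z. br x (br y z) + br y (br z x) + br z (br x y) = 0)"

definition almost_contact_metric ::
  "nat \<Rightarrow> ('a::euclidean_space \<Rightarrow> 'a) \<Rightarrow> 'a \<Rightarrow> ('a \<Rightarrow> real) \<Rightarrow> ('a \<Rightarrow> 'a \<Rightarrow> real) \<Rightarrow> bool" where
  "almost_contact_metric n \<phi> \<xi> \<eta> g \<longleftrightarrow>
     DIM('a) = 2 * n + 1 \<and> linear \<eta> \<and> linear \<phi> \<and> bilinear g \<and>
     (\<forall>x y. g x y = g y x) \<and> (\<forall>x. x \<noteq> 0 \<longrightarrow> g x x > 0) \<and>
     \<eta> \<xi> = 1 \<and> (\<forall>x. \<phi> (\<phi> x) = - x + \<eta> x *\<^sub>R \<xi>) \<and> (\<forall>x. \<eta> (\<phi> x) = 0) \<and>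
     (\<forall>x y. g (\<phi> x) (\<phi> y) = g x y - \<eta> x * \<eta> y)"

definition fund_form :: "('a \<Rightarrow> 'a \<Rightarrow> real) \<Rightarrow> ('a \<Rightarrow> 'a) \<Rightarrow> 'a \<Rightarrow> 'a \<Rightarrow> real" where
  "fund_form g \<phi> x y = g x (\<phi> y)"

text \<open>Chevalley--Eilenberg differentials of 1-forms and 2-forms.\<close>
definition d1 :: "('a \<Rightarrow> 'a \<Rightarrow> 'a) \<Rightarrow> ('a \<Rightarrow> real) \<Rightarrow> 'a \<Rightarrow> 'a \<Rightarrow> real" where
  "d1 br \<eta> x y = - \<eta> (br x y)"

definition d2 :: "('a \<Rightarrow> 'a \<Rightarrow> 'a) \<Rightarrow> ('a \<Rightarrow> 'a \<Rightarrow> real) \<Rightarrow> 'a \<Rightarrow> 'a \<Rightarrow> 'a \<Rightarrow> real" where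
  "d2 br \<omega> x y z = - \<omega> (br x y) z - \<omega> (br y z) x - \<omega> (br z x) y"

text \<open>Wedge of a 1-form and a 2-form (convention compatible with d2 above).\<close>
definition wedge12 :: "('a \<Rightarrow> real) \<Rightarrow> ('a \<Rightarrow> 'a \<Rightarrow> real) \<Rightarrow> 'a \<Rightarrow> 'a \<Rightarrow> 'a \<Rightarrow> real" where
  "wedge12 \<eta> \<omega> x y z = \<eta> x * \<omega> y z + \<eta> y * \<omega> z x + \<eta> z * \<omega> x y"

text \<open>The (2n+1)-form eta \<and> Phi^n, up to a nonzero normalisation constant, evaluated on
  the vectors x 0, ..., x (2n).\<close>
definition eta_wedge_Phi_pow ::
  "nat \<Rightarrow> ('a \<Rightarrow> real) \<Rightarrow> ('a \<Rightarrow> 'a \<Rightarrow> real) \<Rightarrow> (nat \<Rightarrow> 'a) \<Rightarrow> real" where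
  "eta_wedge_Phi_pow n \<eta> \<Phi> x =
     (\<Sum>\<sigma>\<in>{\<sigma>. \<sigma> permutes {..2*n}}.
        of_int (sign \<sigma>) * \<eta> (x (\<sigma> 0)) *
        (\<Prod>i<n. \<Phi> (x (\<sigma> (2*i+1))) (x (\<sigma> (2*i+2)))))"

definition almost_alpha_coKahler ::
  "real \<Rightarrow> nat \<Rightarrow> ('a::euclidean_space \<Rightarrow> 'a \<Rightarrow> 'a) \<Rightarrow> ('a \<Rightarrow> 'a) \<Rightarrow> 'a \<Rightarrow> ('a \<Rightarrow> real)
     \<Rightarrow> ('a \<Rightarrow> 'a \<Rightarrow> real) \<Rightarrow> bool" where
  "almost_alpha_coKahler \<alpha> n br \<phi> \<xi> \<eta> g \<longleftrightarrow>
     lie_algebra br \<and> almost_contact_metric n \<phi> \<xi> \<eta> g \<and>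
     (\<exists>x. eta_wedge_Phi_pow n \<eta> (fund_form g \<phi>) x \<noteq> 0) \<and>
     (\<forall>x y. d1 br \<eta> x y = 0) \<and>
     (\<forall>x y z. d2 br (fund_form g \<phi>) x y z = 2 * \<alpha> * wedge12 \<eta> (fund_form g \<phi>) x y z)"

definition almost_coKahler ::
  "nat \<Rightarrow> ('a::euclidean_space \<Rightarrow> 'a \<Rightarrow> 'a) \<Rightarrow> ('a \<Rightarrow> 'a) \<Rightarrow> 'a \<Rightarrow> ('a \<Rightarrow> real)
     \<Rightarrow> ('a \<Rightarrow> 'a \<Rightarrow> real) \<Rightarrow> bool" where
  "almost_coKahler n br \<phi> \<xi> \<eta> g \<longleftrightarrow> almost_alpha_coKahler 0 n br \<phi> \<xi> \<eta> g"

definition lie_deriv_metric :: "('a \<Rightarrow> 'a \<Rightarrow> 'a) \<Rightarrow> 'a \<Rightarrow> ('a \<Rightarrow> 'a \<Rightarrow> real) \<Rightarrow> 'a \<Rightarrow> 'a \<Rightarrow> real" where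
  "lie_deriv_metric br \<xi> g x y = - g (br \<xi> x) y - g x (br \<xi> y)"

definition lie_deriv_endo :: "('a::real_vector \<Rightarrow> 'a \<Rightarrow> 'a) \<Rightarrow> 'a \<Rightarrow> ('a \<Rightarrow> 'a) \<Rightarrow> 'a \<Rightarrow> 'a" where
  "lie_deriv_endo br \<xi> \<phi> x = br \<xi> (\<phi> x) - \<phi> (br \<xi> x)"

definition killing :: "('a \<Rightarrow> 'a \<Rightarrow> 'a) \<Rightarrow> 'a \<Rightarrow> ('a \<Rightarrow> 'a \<Rightarrow> real) \<Rightarrow> bool" where
  "killing br \<xi> g \<longleftrightarrow> (\<forall>x y. lie_deriv_metric br \<xi> g x y = 0)"

definition K_cosymplectic ::
  "nat \<Rightarrow> ('a::euclidean_space \<Rightarrow> 'a \<Rightarrow> 'a) \<Rightarrow> ('a \<Rightarrow> 'a) \<Rightarrow> 'a \<Rightarrow> ('a \<Rightarrow> real)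
     \<Rightarrow> ('a \<Rightarrow> 'a \<Rightarrow> real) \<Rightarrow> bool" where
  "K_cosymplectic n br \<phi> \<xi> \<eta> g \<longleftrightarrow> almost_coKahler n br \<phi> \<xi> \<eta> g \<and> killing br \<xi> g"

definition skew_adjoint_on :: "'a set \<Rightarrow> ('a \<Rightarrow> 'a \<Rightarrow> real) \<Rightarrow> ('a \<Rightarrow> 'a) \<Rightarrow> bool" where
  "skew_adjoint_on V h T \<longleftrightarrow> (\<forall>x\<in>V. \<forall>y\<in>V. h (T x) y = - h x (T y))"

end

theory Submission
  imports Defs
begin

text \<open>Everything follows from the splitting \<open>\<gg> = \<hh> \<oplus> \<real>\<xi>\<close>, which is \<open>g\<close>-orthogonal
  (\<open>g x \<xi> = \<eta> x\<close>) and preserved by \<open>ad\<^sub>\<xi>\<close> (\<open>d\<eta> = 0\<close> gives \<open>\<eta>([x,y]) = 0\<close>, and \<open>[\<xi>,\<xi>] = 0\<close>),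
  together with the contraction of \<open>d\<Phi> = 2\<alpha> \<eta>\<and>\<Phi>\<close> with \<open>\<xi>\<close>:
  \<open>g([\<xi>,z],\<phi>y) - g([\<xi>,y],\<phi>z) = 2\<alpha> g(y,\<phi>z)\<close>.
  On \<open>\<hh>\<close>, where \<open>\<phi>\<close> is a \<open>g\<close>-orthogonal complex structure, this identity says precisely
  that \<open>D + \<alpha>I\<close> is skew-adjoint iff \<open>D\<close> commutes with \<open>J\<close>; the other equivalences only
  use that both sides vanish on the \<open>\<xi>\<close>-direction.\<close>

lemma lie_algebra_anticomm:
  assumes "lie_algebra br"
  shows "br y x = - br x y"
proof -
  have B: "bilinear br" and alt: "\<And>x. br x x = 0"
    using assms unfolding lie_algebra_def by auto
  have "br (x + y) (x + y) = br x x + br x y + br y x + br y y"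
    by (simp add: bilinear_ladd[OF B] bilinear_radd[OF B])
  then have "br x y + br y x = 0"
    by (simp add: alt)
  then show ?thesis
    by (simp add: eq_neg_iff_add_eq_0 add.commute)
qed

locale almost_contact_metric_algebra =
  fixes n :: nat and \<phi> :: "'a::euclidean_space \<Rightarrow> 'a" and \<xi> :: 'a
    and \<eta> :: "'a \<Rightarrow> real" and g :: "'a \<Rightarrow> 'a \<Rightarrow> real"
  assumes almost_contact_metric: "almost_contact_metric n \<phi> \<xi> \<eta> g"
begin

lemma eta_linear: "linear \<eta>"
  and phi_linear: "linear \<phi>"
  and g_bilinear: "bilinear g"
  and g_sym: "g x y = g y x"
  and g_pos: "x \<noteq> 0 \<Longrightarrow> g x x > 0"
  and eta_xi: "\<eta> \<xi> = 1"
  and phi_phi: "\<phi> (\<phi> x) = - x + \<eta> x *\<^sub>R \<xi>"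
  and eta_phi: "\<eta> (\<phi> x) = 0"
  and g_phi_phi: "g (\<phi> x) (\<phi> y) = g x y - \<eta> x * \<eta> y"
  using almost_contact_metric unfolding almost_contact_metric_def by auto

lemmas g_simps = bilinear_ladd[OF g_bilinear] bilinear_radd[OF g_bilinear]
  bilinear_lmul[OF g_bilinear] bilinear_rmul[OF g_bilinear]
  bilinear_lsub[OF g_bilinear] bilinear_rsub[OF g_bilinear]
  bilinear_lneg[OF g_bilinear] bilinear_rneg[OF g_bilinear]
  bilinear_lzero[OF g_bilinear] bilinear_rzero[OF g_bilinear]

lemmas eta_simps = linear_add[OF eta_linear] linear_scale[OF eta_linear]
  linear_diff[OF eta_linear]

lemmas phi_simps = linear_add[OF phi_linear] linear_scale[OF phi_linear]
  linear_diff[OF phi_linear] linear_0[OF phi_linear]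

lemma phi_xi: "\<phi> \<xi> = 0"
proof -
  have "\<phi> (\<phi> \<xi>) = 0"
    using phi_phi[of \<xi>] eta_xi by simp
  then have "\<phi> (\<phi> (\<phi> \<xi>)) = 0"
    by (simp add: phi_simps)
  moreover have "\<phi> (\<phi> (\<phi> \<xi>)) = - \<phi> \<xi>"
    using phi_phi[of "\<phi> \<xi>"] eta_phi by simp
  ultimately show ?thesis
    by simp
qed

lemma g_xi: "g x \<xi> = \<eta> x"
  using g_phi_phi[of x \<xi>] by (simp add: phi_xi eta_xi g_simps)

lemma g_phi_skew: "g x (\<phi> y) = - g (\<phi> x) y"
proof -
  have "g x (\<phi> y) = g (\<phi> x) (\<phi> (\<phi> y))"
    using g_phi_phi[of x "\<phi> y"] by (simp add: eta_phi)
  also have "\<dots> = - g (\<phi> x) y"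
    by (simp add: phi_phi g_simps g_xi eta_phi)
  finally show ?thesis .
qed

lemma g_nondegenerate:
  assumes "\<And>z. g w z = 0"
  shows "w = 0"
  using assms g_pos by (metis less_irrefl)

lemma eta_horizontal_part: "\<eta> (x - \<eta> x *\<^sub>R \<xi>) = 0"
  by (simp add: eta_simps eta_xi)

end

locale almost_alpha_coKahler_algebra =
  fixes \<alpha> :: real and n :: nat and br :: "'a::euclidean_space \<Rightarrow> 'a \<Rightarrow> 'a"
    and \<phi> :: "'a \<Rightarrow> 'a" and \<xi> :: 'a and \<eta> :: "'a \<Rightarrow> real" and g :: "'a \<Rightarrow> 'a \<Rightarrow> real"
  assumes almost_alpha_coKahler: "almost_alpha_coKahler \<alpha> n br \<phi> \<xi> \<eta> g"
begin

sublocale almost_contact_metric_algebra n \<phi> \<xi> \<eta> g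
  using almost_alpha_coKahler
  by unfold_locales (simp add: almost_alpha_coKahler_def)

lemma lie_algebra: "lie_algebra br"
  and d_eta: "d1 br \<eta> x y = 0"
  and d_Phi: "d2 br (fund_form g \<phi>) x y z = 2 * \<alpha> * wedge12 \<eta> (fund_form g \<phi>) x y z"
  using almost_alpha_coKahler unfolding almost_alpha_coKahler_def by auto

lemma br_bilinear: "bilinear br"
  using lie_algebra unfolding lie_algebra_def by simp

lemmas br_simps = bilinear_ladd[OF br_bilinear] bilinear_radd[OF br_bilinear]
  bilinear_lmul[OF br_bilinear] bilinear_rmul[OF br_bilinear]
  bilinear_lsub[OF br_bilinear] bilinear_rsub[OF br_bilinear]

lemma br_self: "br x x = 0"
  using lie_algebra unfolding lie_algebra_def by simp

lemma eta_br: "\<eta> (br x y) = 0"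
  using d_eta unfolding d1_def by simp

lemma ad_xi_horizontal_part: "br \<xi> (x - \<eta> x *\<^sub>R \<xi>) = br \<xi> x"
  by (simp add: br_simps br_self)

lemma d_Phi_contract_xi:
  "g (br \<xi> z) (\<phi> y) - g (br \<xi> y) (\<phi> z) = 2 * \<alpha> * g y (\<phi> z)"
proof -
  have "g \<xi> (\<phi> y) = 0"
    using g_sym g_xi eta_phi by metis
  then show ?thesis
    using d_Phi[of \<xi> y z] lie_algebra_anticomm[OF lie_algebra, of z \<xi>]
    unfolding d2_def wedge12_def fund_form_def
    by (simp add: phi_xi eta_xi g_simps)
qed

lemma lie_deriv_metric_iff_skew_adjoint:
  "(\<forall>x y. lie_deriv_metric br \<xi> g x y = 2 * \<alpha> * (g x y - \<eta> x * \<eta> y))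
     \<longleftrightarrow> skew_adjoint_on {x. \<eta> x = 0} g (\<lambda>x. br \<xi> x + \<alpha> *\<^sub>R x)"
proof
  assume lie_deriv: "\<forall>x y. lie_deriv_metric br \<xi> g x y = 2 * \<alpha> * (g x y - \<eta> x * \<eta> y)"
  show "skew_adjoint_on {x. \<eta> x = 0} g (\<lambda>x. br \<xi> x + \<alpha> *\<^sub>R x)"
    unfolding skew_adjoint_on_def
  proof (intro ballI)
    fix x y
    assume "x \<in> {x. \<eta> x = 0}" "y \<in> {x. \<eta> x = 0}"
    then show "g (br \<xi> x + \<alpha> *\<^sub>R x) y = - g x (br \<xi> y + \<alpha> *\<^sub>R y)"
      using lie_deriv[rule_format, of x y] unfolding lie_deriv_metric_def
      by (simp add: g_simps algebra_simps)
  qed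
next
  assume skew: "skew_adjoint_on {x. \<eta> x = 0} g (\<lambda>x. br \<xi> x + \<alpha> *\<^sub>R x)"
  show "\<forall>x y. lie_deriv_metric br \<xi> g x y = 2 * \<alpha> * (g x y - \<eta> x * \<eta> y)"
  proof (intro allI)
    fix x y
    define x\<^sub>0 y\<^sub>0 where "x\<^sub>0 = x - \<eta> x *\<^sub>R \<xi>" and "y\<^sub>0 = y - \<eta> y *\<^sub>R \<xi>"
    have x: "x = x\<^sub>0 + \<eta> x *\<^sub>R \<xi>" and y: "y = y\<^sub>0 + \<eta> y *\<^sub>R \<xi>"
      by (simp_all add: x\<^sub>0_def y\<^sub>0_def)
    have "\<eta> x\<^sub>0 = 0" "\<eta> y\<^sub>0 = 0"
      by (simp_all add: x\<^sub>0_def y\<^sub>0_def eta_horizontal_part)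
    then have "g (br \<xi> x\<^sub>0 + \<alpha> *\<^sub>R x\<^sub>0) y\<^sub>0 = - g x\<^sub>0 (br \<xi> y\<^sub>0 + \<alpha> *\<^sub>R y\<^sub>0)"
      using skew unfolding skew_adjoint_on_def by auto
    moreover have "g (br \<xi> x) y = g (br \<xi> x\<^sub>0) y\<^sub>0"
      by (subst x, subst y) (simp add: g_simps br_simps br_self g_xi eta_br)
    moreover have "g x (br \<xi> y) = g x\<^sub>0 (br \<xi> y\<^sub>0)"
      by (subst x, subst y) (simp add: g_simps br_simps br_self g_xi eta_br g_sym[of \<xi>])
    moreover have "g x y = g x\<^sub>0 y\<^sub>0 + \<eta> x * \<eta> y"
    proof -
      have "g x y = g (x\<^sub>0 + \<eta> x *\<^sub>R \<xi>) (y\<^sub>0 + \<eta> y *\<^sub>R \<xi>)"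
        by (simp only: x[symmetric] y[symmetric])
      also have "\<dots> = g x\<^sub>0 y\<^sub>0 + \<eta> x * \<eta> y"
        using \<open>\<eta> x\<^sub>0 = 0\<close> \<open>\<eta> y\<^sub>0 = 0\<close>
        by (simp add: g_simps g_xi g_sym[of \<xi>] eta_simps eta_xi)
      finally show ?thesis .
    qed
    ultimately show "lie_deriv_metric br \<xi> g x y = 2 * \<alpha> * (g x y - \<eta> x * \<eta> y)"
      unfolding lie_deriv_metric_def by (simp add: g_simps algebra_simps)
  qed
qed

lemma skew_adjoint_iff_commute:
  "skew_adjoint_on {x. \<eta> x = 0} g (\<lambda>x. br \<xi> x + \<alpha> *\<^sub>R x)
     \<longleftrightarrow> (\<forall>x\<in>{x. \<eta> x = 0}. br \<xi> (\<phi> x) = \<phi> (br \<xi> x))"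
proof
  assume skew: "skew_adjoint_on {x. \<eta> x = 0} g (\<lambda>x. br \<xi> x + \<alpha> *\<^sub>R x)"
  show "\<forall>x\<in>{x. \<eta> x = 0}. br \<xi> (\<phi> x) = \<phi> (br \<xi> x)"
  proof
    fix y
    define w where "w = br \<xi> (\<phi> y) - \<phi> (br \<xi> y)"
    have "g w z = 0" for z
    proof -
      define z\<^sub>0 where "z\<^sub>0 = z - \<eta> z *\<^sub>R \<xi>"
      have "\<eta> z\<^sub>0 = 0"
        by (simp add: z\<^sub>0_def eta_horizontal_part)
      then have "g (br \<xi> z\<^sub>0 + \<alpha> *\<^sub>R z\<^sub>0) (\<phi> y) = - g z\<^sub>0 (br \<xi> (\<phi> y) + \<alpha> *\<^sub>R \<phi> y)"
        using skew eta_phi unfolding skew_adjoint_on_def by auto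
      then have "g (br \<xi> z\<^sub>0) (\<phi> y) + 2 * \<alpha> * g (\<phi> y) z\<^sub>0 = - g (br \<xi> (\<phi> y)) z\<^sub>0"
        by (simp add: g_simps g_sym[of z\<^sub>0] algebra_simps)
      moreover have "g (br \<xi> z\<^sub>0) (\<phi> y) + g (\<phi> (br \<xi> y)) z\<^sub>0 = - 2 * \<alpha> * g (\<phi> y) z\<^sub>0"
        using d_Phi_contract_xi[of z\<^sub>0 y] by (simp add: g_phi_skew)
      ultimately have "g w z\<^sub>0 = 0"
        by (simp add: w_def g_simps)
      moreover have "g w \<xi> = 0"
        by (simp add: w_def g_xi eta_simps eta_br eta_phi)
      moreover have "g w z = g w (z\<^sub>0 + \<eta> z *\<^sub>R \<xi>)"
        by (simp add: z\<^sub>0_def)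
      ultimately show "g w z = 0"
        by (simp add: g_simps)
    qed
    then have "w = 0"
      by (rule g_nondegenerate)
    then show "br \<xi> (\<phi> y) = \<phi> (br \<xi> y)"
      by (simp add: w_def)
  qed
next
  assume commute: "\<forall>x\<in>{x. \<eta> x = 0}. br \<xi> (\<phi> x) = \<phi> (br \<xi> x)"
  show "skew_adjoint_on {x. \<eta> x = 0} g (\<lambda>x. br \<xi> x + \<alpha> *\<^sub>R x)"
    unfolding skew_adjoint_on_def
  proof (intro ballI)
    fix x y
    assume "x \<in> {x. \<eta> x = 0}" "y \<in> {x. \<eta> x = 0}"
    then have "\<eta> x = 0" "\<eta> y = 0"
      by auto
    then have "g (br \<xi> x) (- y) - g (\<phi> (br \<xi> y)) (\<phi> x) = 2 * \<alpha> * g (\<phi> y) (\<phi> x)"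
      using d_Phi_contract_xi[of x "\<phi> y"] commute phi_phi[of y] by auto
    then have "g (br \<xi> x) y = - g (br \<xi> y) x - 2 * \<alpha> * g y x"
      using \<open>\<eta> x = 0\<close> by (simp add: g_phi_phi g_simps algebra_simps)
    then show "g (br \<xi> x + \<alpha> *\<^sub>R x) y = - g x (br \<xi> y + \<alpha> *\<^sub>R y)"
      using g_sym[of "br \<xi> y" x] g_sym[of y x] by (simp add: g_simps algebra_simps)
  qed
qed

lemma commute_iff_lie_deriv_endo_eq_0:
  "(\<forall>x\<in>{x. \<eta> x = 0}. br \<xi> (\<phi> x) = \<phi> (br \<xi> x))
     \<longleftrightarrow> (\<forall>x. lie_deriv_endo br \<xi> \<phi> x = 0)"
proof
  assume commute: "\<forall>x\<in>{x. \<eta> x = 0}. br \<xi> (\<phi> x) = \<phi> (br \<xi> x)"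
  show "\<forall>x. lie_deriv_endo br \<xi> \<phi> x = 0"
  proof
    fix x
    have "br \<xi> (\<phi> x) = br \<xi> (\<phi> (x - \<eta> x *\<^sub>R \<xi>))"
      by (simp add: phi_simps phi_xi)
    also have "\<dots> = \<phi> (br \<xi> x)"
      using commute eta_horizontal_part ad_xi_horizontal_part by auto
    finally show "lie_deriv_endo br \<xi> \<phi> x = 0"
      unfolding lie_deriv_endo_def by simp
  qed
qed (simp add: lie_deriv_endo_def)

end

theorem mainTheorem5:
  fixes \<alpha> :: real and n :: nat
    and br :: "'a::euclidean_space \<Rightarrow> 'a \<Rightarrow> 'a"
    and \<phi> :: "'a \<Rightarrow> 'a" and \<xi> :: 'a and \<eta> :: "'a \<Rightarrow> real" and g :: "'a \<Rightarrow> 'a \<Rightarrow> real"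
  assumes "almost_alpha_coKahler \<alpha> n br \<phi> \<xi> \<eta> g"
  defines "\<hh> \<equiv> {x. \<eta> x = 0}"
  shows "((\<forall>x y. lie_deriv_metric br \<xi> g x y = 2 * \<alpha> * (g x y - \<eta> x * \<eta> y))
           \<longleftrightarrow> skew_adjoint_on \<hh> g (\<lambda>x. br \<xi> x + \<alpha> *\<^sub>R x))
       \<and> (skew_adjoint_on \<hh> g (\<lambda>x. br \<xi> x + \<alpha> *\<^sub>R x)
           \<longleftrightarrow> (\<forall>x\<in>\<hh>. br \<xi> (\<phi> x) = \<phi> (br \<xi> x)))
       \<and> ((\<forall>x\<in>\<hh>. br \<xi> (\<phi> x) = \<phi> (br \<xi> x))
           \<longleftrightarrow> (\<forall>x. lie_deriv_endo br \<xi> \<phi> x = 0))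
       \<and> (\<alpha> = 0 \<longrightarrow>
           ((\<forall>x y. lie_deriv_metric br \<xi> g x y = 2 * \<alpha> * (g x y - \<eta> x * \<eta> y))
             \<longleftrightarrow> K_cosymplectic n br \<phi> \<xi> \<eta> g))"
proof -
  interpret almost_alpha_coKahler_algebra \<alpha> n br \<phi> \<xi> \<eta> g
    by standard (fact assms)
  have "\<alpha> = 0 \<Longrightarrow>
      (\<forall>x y. lie_deriv_metric br \<xi> g x y = 2 * \<alpha> * (g x y - \<eta> x * \<eta> y))
        \<longleftrightarrow> K_cosymplectic n br \<phi> \<xi> \<eta> g"
    using assms(1) unfolding K_cosymplectic_def almost_coKahler_def killing_def by auto
  then show ?thesis
    unfolding \<hh>_def
    using lie_deriv_metric_iff_skew_adjoint skew_adjoint_iff_commute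
      commute_iff_lie_deriv_endo_eq_0 by blast
qed

end
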